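(* Let $n$ be a positive integer and let $a,b$ be distinct integers with $0<a,b<n$, so that $G=C_{2n}(a,b,n)$ is a $5$-regular circulant graph. Suppose there exists a generator $g$ of the cyclic group $(\mathbb{Z}_{2n},+)$ such that, writing $a=p\cdot g$ and $b=q\cdot g$ with $p,q\in\{0,1,\dots,2n-1\}$ (i.e. $pg\equiv a$ and $qg\equiv b \pmod{2n}$), the number $r=\min\{p,q,2n-p,2n-q\}$ satisfies $r\geq \lceil \tfrac{2n}{3}\rceil$. Then $G$ is word-representable.
   Context: Two distinct letters $x,y$ alternate in a word $w$ if, after deleting all other letters from $w$, the resulting word is of the form $xyxy\cdots$ or $yxyx\cdots$ (of even or odd length). A graph $G=(V,E)$ is word-representable if there is a word $w$ over the alphabet $V$, containing every letter of $V$ at least once, such that for all distinct $x,y\in V$, $xy\in E$ if and only if $x$ and $y$ alternate in $w$. For an integer $m$ and a set $R$ of positive integers each at most $m/2$, the circulant graph $C_m(R)$ has vertex set $\{0,1,\dots,m-1\}$, with $i$ and $j$ adjacent iff $\min(|i-j|,\,m-|i-j|)\in R$. $C_{2n}(a,b,n)$ denotes the circulant graph on $2n$ vertices with jump set $\{a,b,n\}$. For an integer $k$ and $g\in\mathbb{Z}_{2n}$, $k\cdot g$ denotes the $k$-fold sum of $g$ in $\mathbb{Z}_{2n}$. *)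

theory Defs
  imports Complex_Main "HOL-Number_Theory.Cong"
begin

definition alternate :: "'a list \<Rightarrow> 'a \<Rightarrow> 'a \<Rightarrow> bool" where
  "alternate w x y \<longleftrightarrow>
     (let u = filter (\<lambda>c. c = x \<or> c = y) w in
      \<forall>i. Suc i < length u \<longrightarrow> u ! i \<noteq> u ! Suc i)"

definition word_representable :: "'a set \<Rightarrow> ('a \<Rightarrow> 'a \<Rightarrow> bool) \<Rightarrow> bool" where
  "word_representable V E \<longleftrightarrow>
     (\<exists>w. set w = V \<and>
          (\<forall>x\<in>V. \<forall>y\<in>V. x \<noteq> y \<longrightarrow> (E x y \<longleftrightarrow> alternate w x y)))"

definition circ_vertices :: "nat \<Rightarrow> nat set" where
  "circ_vertices m = {0..<m}"

definition circ_adj :: "nat \<Rightarrow> nat set \<Rightarrow> nat \<Rightarrow> nat \<Rightarrow> bool" where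
  "circ_adj m R i j \<longleftrightarrow>
     (let d = nat \<bar>int i - int j\<bar> in min d (m - d) \<in> R)"

end

theory Submission
  imports Defs "HOL-Library.Multiset"
begin

text \<open>Let \<open>h\<close> be the inverse of \<open>g\<close> modulo \<open>2n\<close>. Multiplication by \<open>h\<close> is a
  bijection of \<open>\<int>\<^sub>2\<^sub>n\<close> sending the jumps \<open>a, b, n\<close> to \<open>p, q, n\<close> (as \<open>h\<close> is odd),
  and with \<open>L = \<lceil>2n/3\<rceil>\<close> these all lie in \<open>[L, 2n - L]\<close>. So if the relabelled
  circle \<open>v h mod 2n\<close> is cut into the three arcs \<open>[0, L)\<close>, \<open>[L, 2L)\<close>, \<open>[2L, 2n)\<close>,
  adjacent vertices land in different arcs, since two points of one arc differ by
  less than \<open>L\<close>: the graph is 3-colourable.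

  A 3-coloured graph is word-representable: concatenate, over all non-edges \<open>{x, y}\<close>,
  a word containing every vertex twice in which each edge alternates with its
  lower-coloured end first, while \<open>x\<close> and \<open>y\<close> do not alternate.\<close>

definition two_copy_word :: "nat \<Rightarrow> (nat \<Rightarrow> real) \<Rightarrow> (nat \<Rightarrow> real) \<Rightarrow> nat list" where
  "two_copy_word N f1 f2 =
     map fst (sort_key snd (map (\<lambda>v. (v, f1 v)) [0..<N] @ map (\<lambda>v. (v, f2 v)) [0..<N]))"

lemma set_two_copy_word: "set (two_copy_word N f1 f2) = {0..<N}"
  unfolding two_copy_word_def by (force simp: image_Un image_image)

lemma mset_filter_upt_two:
  assumes "u \<noteq> v" "u < N" "v < N"
  shows "mset (filter (\<lambda>c. c = u \<or> c = v) [0..<N]) = {#u, v#}"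
proof -
  have "set (filter (\<lambda>c. c = u \<or> c = v) [0..<N]) = {u, v}"
    using assms by auto
  then have "mset (filter (\<lambda>c. c = u \<or> c = v) [0..<N]) = mset_set {u, v}"
    by (metis distinct_filter distinct_upt mset_set_set)
  then show ?thesis using assms(1) by simp
qed

lemma filter_two_copy_word:
  assumes "u \<noteq> v" "u < N" "v < N" "distinct [f1 u, f1 v, f2 u, f2 v]"
  shows "filter (\<lambda>c. c = u \<or> c = v) (two_copy_word N f1 f2) =
           map fst (sort_key snd [(u, f1 u), (v, f1 v), (u, f2 u), (v, f2 v)])"
proof -
  let ?F = "filter (\<lambda>c. c = u \<or> c = v) [0..<N]"
  let ?L = "map (\<lambda>v. (v, f1 v)) ?F @ map (\<lambda>v. (v, f2 v)) ?F"
  have "filter (\<lambda>c. c = u \<or> c = v) (two_copy_word N f1 f2) = map fst (sort_key snd ?L)"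
    unfolding two_copy_word_def by (simp add: filter_map filter_sort comp_def)
  also have "sort_key snd ?L = sort_key snd [(u, f1 u), (v, f1 v), (u, f2 u), (v, f2 v)]"
  proof (rule sort_key_eq_sort_key)
    show "mset ?L = mset [(u, f1 u), (v, f1 v), (u, f2 u), (v, f2 v)]"
      using mset_filter_upt_two[OF assms(1-3)] by (simp add: add_mset_commute)
    have "set ?F = {u, v}" using assms by auto
    then show "inj_on snd (set ?L)" using assms(4) by (auto simp: inj_on_def)
  qed
  finally show ?thesis .
qed

lemma sort_interleaved_keys:
  fixes a1 b1 a2 b2 :: real
  assumes "a1 < b1" "b1 < a2" "a2 < b2"
  shows "map fst (sort_key snd [(u, a1), (v, b1), (u, a2), (v, b2)]) = [u, v, u, v]"
  using assms by simp

lemma not_distinct_adj_sort_nested_keys: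
  fixes a1 b1 a2 b2 :: real
  assumes "a1 < a2" "b1 < b2" "distinct [a1, b1, a2, b2]"
    and "\<not> (a1 < b1 \<and> b1 < a2 \<and> a2 < b2)" "\<not> (b1 < a1 \<and> a1 < b2 \<and> b2 < a2)"
  shows "\<not> distinct_adj (map fst (sort_key snd [(u, a1), (v, b1), (u, a2), (v, b2)]))"
  using assms by (auto simp: not_less)

lemma alternate_iff_distinct_adj:
  "alternate w x y \<longleftrightarrow> distinct_adj (filter (\<lambda>c. c = x \<or> c = y) w)"
  by (simp add: alternate_def Let_def distinct_adj_conv_nth)

lemma alternate_commute: "alternate w x y \<longleftrightarrow> alternate w y x"
proof -
  have "(\<lambda>c. c = x \<or> c = y) = (\<lambda>c. c = y \<or> c = x)" by auto
  then show ?thesis by (simp only: alternate_iff_distinct_adj)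
qed

lemma distinct_adj_concat_replicate:
  assumes "s \<noteq> t"
  shows "distinct_adj (concat (replicate K [s, t, s, t]))"
proof -
  have "distinct_adj (t # concat (replicate K [s, t, s, t]))"
    using assms by (induction K) auto
  then show ?thesis by (rule distinct_adj_ConsD)
qed

locale three_colouring =
  fixes N :: nat and E :: "nat \<Rightarrow> nat \<Rightarrow> bool" and col :: "nat \<Rightarrow> nat"
  assumes sym: "E x y \<Longrightarrow> E y x"
    and col_le_2: "v < N \<Longrightarrow> col v \<le> 2"
    and proper: "u < N \<Longrightarrow> v < N \<Longrightarrow> u \<noteq> v \<Longrightarrow> E u v \<Longrightarrow> col u \<noteq> col v"
begin

definition oriented_nonedge :: "nat \<Rightarrow> nat \<Rightarrow> bool" where
  "oriented_nonedge x y \<longleftrightarrow> x \<noteq> y \<and> \<not> E x y \<and> col x \<le> col y"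

definition colour_key :: "nat \<Rightarrow> real" where
  "colour_key v = real (col v) * real N + real v"

text \<open>Both copies list the colour classes in order (\<open>colour_key\<close>), so an edge alternates
  with its lower-coloured end first. For the oriented non-edge \<open>(x, y)\<close>, \<open>x\<close> and \<open>y\<close> are
  moved by fractions of a unit to class boundaries so that they nest instead: if
  \<open>col x = col y\<close>, \<open>x\<close> goes to the front of the class in the first copy and to its end
  in the second (\<open>x y y x\<close>); if \<open>col y = col x + 1\<close>, \<open>y\<close> is pulled in front of \<open>x\<close> at
  the end of \<open>x\<close>'s class in the first copy, and \<open>x\<close> goes to the front, \<open>y\<close> to the end of
  its class in the second (\<open>y x x y\<close>); if \<open>col y = col x + 2\<close>, the second \<open>x\<close> and the
  first \<open>y\<close> meet at the junction of the two copies (\<open>x x y y\<close>).\<close>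

definition first_key :: "nat \<Rightarrow> nat \<Rightarrow> nat \<Rightarrow> real" where
  "first_key x y v =
    (if oriented_nonedge x y \<and> v = x then
       (if col x = col y then real (col x) * real N - 1/2
        else if col y = Suc (col x) then real (Suc (col x)) * real N - 1/4
        else colour_key x)
     else if oriented_nonedge x y \<and> v = y then
       (if col x = col y then colour_key y
        else if col y = Suc (col x) then real (Suc (col x)) * real N - 1/2
        else 3 * real N - 1/2)
     else colour_key v)"

definition second_key :: "nat \<Rightarrow> nat \<Rightarrow> nat \<Rightarrow> real" where
  "second_key x y v = 3 * real N +
    (if oriented_nonedge x y \<and> v = x then
       (if col x = col y then real (Suc (col x)) * real N - 1/2
        else if col y = Suc (col x) then real (col x) * real N - 1/4
        else - 3/4)
     else if oriented_nonedge x y \<and> v = y \<and> col y = Suc (col x) then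
       real (Suc (Suc (col x))) * real N - 1/2
     else colour_key v)"

lemma col_cases:
  assumes "v < N"
  obtains "col v = 0" | "col v = 1" | "col v = 2"
  using col_le_2[OF assms] by linarith

lemma edge_keys_interleave:
  assumes "u < N" "v < N" "x < N" "y < N" "E u v" "col u < col v"
  shows "first_key x y u < first_key x y v \<and> first_key x y v < second_key x y u \<and>
         second_key x y u < second_key x y v"
proof (cases "oriented_nonedge x y")
  case False
  then show ?thesis using assms(1,2,6)
    unfolding first_key_def second_key_def colour_key_def
    by (cases rule: col_cases[OF assms(1)]; cases rule: col_cases[OF assms(2)]) simp_all
next
  case True
  then have "\<not> (u = x \<and> v = y \<or> u = y \<and> v = x)" "x \<noteq> y" "col x \<le> col y"
    using assms(5) sym unfolding oriented_nonedge_def by blast+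
  then show ?thesis using True assms(1-4,6)
    unfolding first_key_def second_key_def colour_key_def
    by (cases rule: col_cases[OF assms(1)]; cases rule: col_cases[OF assms(2)];
        cases rule: col_cases[OF assms(3)]; cases rule: col_cases[OF assms(4)]) auto
qed

lemma oriented_nonedge_keys_nest:
  assumes "x < N" "y < N" "oriented_nonedge x y"
  defines "a1 \<equiv> first_key x y x" and "a2 \<equiv> second_key x y x"
    and "b1 \<equiv> first_key x y y" and "b2 \<equiv> second_key x y y"
  shows "a1 < a2 \<and> b1 < b2 \<and> distinct [a1, b1, a2, b2] \<and>
         \<not> (a1 < b1 \<and> b1 < a2 \<and> a2 < b2) \<and> \<not> (b1 < a1 \<and> a1 < b2 \<and> b2 < a2)"
proof -
  have "x \<noteq> y" "col x \<le> col y"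
    using assms(3) by (auto simp: oriented_nonedge_def)
  then show ?thesis using assms(1-3)
    unfolding a1_def a2_def b1_def b2_def first_key_def second_key_def colour_key_def
    by (cases rule: col_cases[OF assms(1)]; cases rule: col_cases[OF assms(2)]) simp_all
qed

definition colour_word :: "nat list" where
  "colour_word =
     concat (map (\<lambda>(x, y). two_copy_word N (first_key x y) (second_key x y))
       (List.product [0..<N] [0..<N]))"

lemma set_colour_word: "set colour_word = {0..<N}"
  unfolding colour_word_def by (auto simp: set_two_copy_word)

lemma alternate_colour_word_if_edge:
  assumes "s < N" "t < N" "E s t" "col s < col t"
  shows "alternate colour_word s t"
proof -
  let ?pairs = "List.product [0..<N] [0..<N]"
  have "s \<noteq> t" using assms(4) by auto
  have piece: "filter (\<lambda>c. c = s \<or> c = t) (two_copy_word N (first_key x y) (second_key x y))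
      = [s, t, s, t]" if "(x, y) \<in> set ?pairs" for x y
  proof -
    have "x < N" "y < N" using that by auto
    note interleave = edge_keys_interleave[OF assms(1,2) this assms(3,4)]
    then have "distinct [first_key x y s, first_key x y t, second_key x y s, second_key x y t]"
      by auto
    with interleave show ?thesis
      by (simp add: filter_two_copy_word[OF \<open>s \<noteq> t\<close> assms(1,2)] sort_interleaved_keys)
  qed
  have "filter (\<lambda>c. c = s \<or> c = t) colour_word = concat (map (\<lambda>_. [s, t, s, t]) ?pairs)"
    unfolding colour_word_def filter_concat map_map
    by (intro arg_cong[where f = concat] map_cong) (auto simp: piece)
  then show ?thesis
    by (simp add: alternate_iff_distinct_adj map_replicate_const
        distinct_adj_concat_replicate[OF \<open>s \<noteq> t\<close>])
qed

lemma not_alternate_colour_word_if_oriented_nonedge: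
  assumes "s < N" "t < N" "oriented_nonedge s t"
  shows "\<not> alternate colour_word s t"
proof
  let ?piece = "\<lambda>p. filter (\<lambda>c. c = s \<or> c = t)
    (two_copy_word N (first_key (fst p) (snd p)) (second_key (fst p) (snd p)))"
  have "(s, t) \<in> set (List.product [0..<N] [0..<N])"
    using assms(1,2) by simp
  then obtain pre post where "List.product [0..<N] [0..<N] = pre @ (s, t) # post"
    by (meson split_list)
  then have "filter (\<lambda>c. c = s \<or> c = t) colour_word =
      concat (map ?piece pre) @ ?piece (s, t) @ concat (map ?piece post)"
    by (simp add: colour_word_def filter_concat map_map comp_def split_def)
  moreover assume "alternate colour_word s t"
  ultimately have "distinct_adj (concat (map ?piece pre) @ ?piece (s, t) @ concat (map ?piece post))"
    by (simp only: alternate_iff_distinct_adj)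
  then have "distinct_adj (?piece (s, t))"
    by (blast dest: distinct_adj_appendD1 distinct_adj_appendD2)
  have "s \<noteq> t" using assms(3) by (simp add: oriented_nonedge_def)
  note nest = oriented_nonedge_keys_nest[OF assms]
  have "?piece (s, t) = map fst (sort_key snd
      [(s, first_key s t s), (t, first_key s t t), (s, second_key s t s), (t, second_key s t t)])"
    unfolding fst_conv snd_conv
    by (rule filter_two_copy_word[OF \<open>s \<noteq> t\<close> assms(1,2)]) (use nest in blast)
  moreover have "\<not> distinct_adj (map fst (sort_key snd
      [(s, first_key s t s), (t, first_key s t t), (s, second_key s t s), (t, second_key s t t)]))"
    using nest by (intro not_distinct_adj_sort_nested_keys) auto
  ultimately show False
    using \<open>distinct_adj (?piece (s, t))\<close> by metis
qed

theorem word_representable: "word_representable {0..<N} E"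
  unfolding word_representable_def
proof (intro exI conjI ballI impI)
  show "set colour_word = {0..<N}" by (rule set_colour_word)
  fix x y assume "x \<in> {0..<N}" "y \<in> {0..<N}" "x \<noteq> y"
  then have xy: "x < N" "y < N" by auto
  show "E x y \<longleftrightarrow> alternate colour_word x y"
  proof
    assume "E x y"
    then consider "col x < col y" | "col y < col x"
      using proper[OF xy \<open>x \<noteq> y\<close>] by fastforce
    then show "alternate colour_word x y"
    proof cases
      case 1
      then show ?thesis by (rule alternate_colour_word_if_edge[OF xy \<open>E x y\<close>])
    next
      case 2
      then have "alternate colour_word y x"
        by (rule alternate_colour_word_if_edge[OF xy(2,1) sym[OF \<open>E x y\<close>]])
      then show ?thesis by (simp only: alternate_commute)
    qed
  next
    assume alt: "alternate colour_word x y"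
    show "E x y"
    proof (rule ccontr)
      assume "\<not> E x y"
      then have "oriented_nonedge x y \<or> oriented_nonedge y x"
        using sym \<open>x \<noteq> y\<close> by (auto simp: oriented_nonedge_def)
      moreover have "alternate colour_word y x"
        using alt by (simp only: alternate_commute)
      ultimately show False
        using alt not_alternate_colour_word_if_oriented_nonedge xy by blast
    qed
  qed
qed

end

lemma circ_adj_commute: "circ_adj m R i j \<longleftrightarrow> circ_adj m R j i"
  unfolding circ_adj_def Let_def by (simp add: abs_minus_commute)

lemma circ_adj_imp_cong:
  assumes "u < N" "v < N" "circ_adj N S u v"
  obtains s where "s \<in> S" "[int u - int v = int s] (mod int N) \<or> [int v - int u = int s] (mod int N)"
proof -
  define d where "d = nat \<bar>int u - int v\<bar>"
  have d_mem: "min d (N - d) \<in> S"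
    using assms(3) by (simp add: circ_adj_def Let_def d_def)
  have "d < N" and diff: "int u - int v = int d \<or> int v - int u = int d"
    using assms(1,2) unfolding d_def by linarith+
  have wrap: "[- int d = int (N - d)] (mod int N)"
    using \<open>d < N\<close> by (simp add: cong_iff_dvd_diff of_nat_diff)
  have "[int u - int v = int d] (mod int N) \<or> [int v - int u = int d] (mod int N)"
    using diff by auto
  moreover have "[int u - int v = int (N - d)] (mod int N) \<or> [int v - int u = int (N - d)] (mod int N)"
  proof (cases "int u - int v = int d")
    case True
    then have "int v - int u = - int d" by simp
    with wrap show ?thesis by simp
  next
    case False
    with diff have "int u - int v = - int d" by simp
    with wrap show ?thesis by simp
  qed
  ultimately show thesis
    using d_mem that by (cases "d \<le> N - d") (simp_all add: min_def)
qed

lemma abs_diff_less_if_div_eq: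
  fixes x y L :: nat
  assumes "x div L = y div L" "0 < L"
  shows "\<bar>int x - int y\<bar> < int L"
proof -
  define q where "q = x div L"
  have "int x = int L * int q + int (x mod L)"
    unfolding q_def by (simp flip: of_nat_mult of_nat_add)
  moreover have "int y = int L * int q + int (y mod L)"
    unfolding q_def assms(1) by (simp flip: of_nat_mult of_nat_add)
  moreover have "x mod L < L" "y mod L < L"
    using assms(2) by simp_all
  ultimately show ?thesis by linarith
qed

lemma abs_ge_if_cong_middle:
  fixes t r N L :: int
  assumes "[t = r] (mod N)" "L \<le> r" "r + L \<le> N"
  shows "L \<le> \<bar>t\<bar>"
proof -
  obtain k where k: "t = r + N * k"
    using assms(1) by (metis cong_iff_lin cong_sym)
  show ?thesis
  proof (cases "0 \<le> L")
    case True
    then have "0 \<le> N" using assms(2,3) by linarith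
    show ?thesis
    proof (cases "0 \<le> k")
      case True
      with \<open>0 \<le> N\<close> have "0 \<le> N * k" by simp
      then show ?thesis using k assms(2) by linarith
    next
      case False
      then have "N * k \<le> N * (- 1)"
        using \<open>0 \<le> N\<close> by (intro mult_left_mono) simp_all
      then show ?thesis using k assms(3) by linarith
    qed
  qed linarith
qed

lemma circ_adj_multiplier_colouring:
  fixes N L h :: nat
  assumes middle: "\<And>s. s \<in> S \<Longrightarrow> L \<le> s * h mod N \<and> s * h mod N + L \<le> N"
    and "0 < L" "u < N" "v < N" "circ_adj N S u v"
  shows "u * h mod N div L \<noteq> v * h mod N div L"
proof
  assume same_block: "u * h mod N div L = v * h mod N div L"
  obtain s where "s \<in> S"
    and s: "[int u - int v = int s] (mod int N) \<or> [int v - int u = int s] (mod int N)"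
    using circ_adj_imp_cong assms(3-5) by blast
  define t where "t = int (u * h mod N) - int (v * h mod N)"
  define r where "r = int (s * h mod N)"
  have mod_cong: "[int (w * h mod N) = int w * int h] (mod int N)" for w
    by (simp add: cong_def of_nat_mod)
  have t_cong: "[t = (int u - int v) * int h] (mod int N)"
    unfolding t_def using cong_diff[OF mod_cong mod_cong] by (simp add: left_diff_distrib)
  then have "[- t = - ((int u - int v) * int h)] (mod int N)"
    by (simp only: cong_minus_minus_iff)
  then have minus_t_cong: "[- t = (int v - int u) * int h] (mod int N)"
    by (metis minus_diff_eq mult_minus_left)
  have r_cong: "[int s * int h = r] (mod int N)"
    unfolding r_def using mod_cong cong_sym by blast
  have "[t = r] (mod int N) \<or> [- t = r] (mod int N)"
    using s cong_trans[OF t_cong cong_trans[OF cong_scalar_right r_cong]]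
      cong_trans[OF minus_t_cong cong_trans[OF cong_scalar_right r_cong]] by blast
  moreover have "int L \<le> r" "r + int L \<le> int N"
    unfolding r_def using middle[OF \<open>s \<in> S\<close>] by simp_all
  ultimately have "int L \<le> \<bar>t\<bar> \<or> int L \<le> \<bar>- t\<bar>"
    using abs_ge_if_cong_middle by blast
  then have "int L \<le> \<bar>t\<bar>" by simp
  moreover have "\<bar>t\<bar> < int L"
    unfolding t_def using abs_diff_less_if_div_eq[OF same_block \<open>0 < L\<close>] .
  ultimately show False by simp
qed

theorem circ_word_representable_if_multiplier:
  fixes N L h :: nat
  assumes "N \<le> 3 * L"
    and middle: "\<And>s. s \<in> S \<Longrightarrow> L \<le> s * h mod N \<and> s * h mod N + L \<le> N"
  shows "word_representable {0..<N} (circ_adj N S)"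
proof -
  interpret three_colouring N "circ_adj N S" "\<lambda>v. v * h mod N div L"
  proof
    show "circ_adj N S y x" if "circ_adj N S x y" for x y
      using that circ_adj_commute by blast
    fix u v assume "u < N" "v < N"
    then have "0 < L" using assms(1) by linarith
    have "u * h mod N < N"
      using \<open>u < N\<close> by simp
    then have "u * h mod N < 3 * L"
      using assms(1) by linarith
    then have "u * h mod N div L < 3"
      by (simp add: div_less_iff_less_mult[OF \<open>0 < L\<close>] mult.commute)
    then show "u * h mod N div L \<le> 2" by simp
    show "u * h mod N div L \<noteq> v * h mod N div L" if "u \<noteq> v" "circ_adj N S u v"
      using circ_adj_multiplier_colouring[OF middle \<open>0 < L\<close> \<open>u < N\<close> \<open>v < N\<close> that(2)] .
  qed
  show ?thesis by (rule word_representable)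
qed

lemma mod_eq_if_cong_inverse:
  fixes p g h a N :: nat
  assumes "[p * g = a] (mod N)" "[g * h = 1] (mod N)" "p < N"
  shows "a * h mod N = p"
proof -
  have "[a * h = p * (g * h)] (mod N)"
    using cong_scalar_right[OF cong_sym[OF assms(1)], of h] by (simp add: mult.assoc)
  also have "[p * (g * h) = p * 1] (mod N)"
    using assms(2) by (rule cong_mult[OF cong_refl])
  finally show ?thesis
    using assms(3) by (simp add: cong_def)
qed

lemma mult_odd_mod_double:
  fixes n h :: nat
  assumes "odd h" "0 < n"
  shows "n * h mod (2 * n) = n"
proof -
  obtain j where "h = 2 * j + 1" using assms(1) by (rule oddE)
  then have "n * h = n + (2 * n) * j" by (simp add: algebra_simps)
  then show ?thesis using assms(2) by simp
qed

lemma ceiling_two_thirds_bounds: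
  fixes n :: nat
  defines "L \<equiv> nat \<lceil>2 * real n / 3\<rceil>"
  shows "real L = of_int \<lceil>2 * real n / 3\<rceil>" "2 * n \<le> 3 * L" "L \<le> n"
proof -
  show L_eq: "real L = of_int \<lceil>2 * real n / 3\<rceil>"
    unfolding L_def by simp
  have "2 * real n / 3 \<le> real L"
    unfolding L_eq by (rule le_of_int_ceiling)
  then show "2 * n \<le> 3 * L" by linarith
  have "\<lceil>2 * real n / 3\<rceil> \<le> int n" by (simp add: ceiling_le_iff)
  then show "L \<le> n" unfolding L_def by linarith
qed

theorem theorem19:
  fixes n a b :: nat
  assumes "0 < n" and "0 < a" and "a < n" and "0 < b" and "b < n" and "a \<noteq> b"
    and "\<exists>g p q. g < 2 * n \<and> coprime g (2 * n) \<and> p < 2 * n \<and> q < 2 * n \<and>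
           [p * g = a] (mod 2 * n) \<and> [q * g = b] (mod 2 * n) \<and>
           of_int \<lceil>2 * real n / 3\<rceil> \<le> real (min (min p q) (min (2 * n - p) (2 * n - q)))"
  shows "word_representable (circ_vertices (2 * n)) (circ_adj (2 * n) {a, b, n})"
proof -
  obtain g p q where "coprime g (2 * n)" and pq: "p < 2 * n" "q < 2 * n"
    and "[p * g = a] (mod 2 * n)" "[q * g = b] (mod 2 * n)"
    and r: "of_int \<lceil>2 * real n / 3\<rceil> \<le> real (min (min p q) (min (2 * n - p) (2 * n - q)))"
    using assms(7) by blast
  obtain h where h: "[g * h = 1] (mod 2 * n)"
    using cong_solve_coprime_nat[OF \<open>coprime g (2 * n)\<close>] by auto
  have "odd h"
    using cong_modulus_mult_nat[OF h] by (auto simp: cong_def)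
  define L where "L = nat \<lceil>2 * real n / 3\<rceil>"
  note L = ceiling_two_thirds_bounds[of n, folded L_def]
  have "real L \<le> real (min (min p q) (min (2 * n - p) (2 * n - q)))"
    using r L(1) by simp
  then have "L \<le> p" "p + L \<le> 2 * n" "L \<le> q" "q + L \<le> 2 * n"
    using pq by linarith+
  moreover have "a * h mod (2 * n) = p" "b * h mod (2 * n) = q"
    using mod_eq_if_cong_inverse[OF _ h] pq \<open>[p * g = a] (mod 2 * n)\<close>
      \<open>[q * g = b] (mod 2 * n)\<close> by blast+
  moreover have "n * h mod (2 * n) = n"
    using mult_odd_mod_double[OF \<open>odd h\<close> assms(1)] .
  ultimately have "L \<le> s * h mod (2 * n) \<and> s * h mod (2 * n) + L \<le> 2 * n" if "s \<in> {a, b, n}" for s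
    using that L(3) by auto
  then show ?thesis
    unfolding circ_vertices_def by (rule circ_word_representable_if_multiplier[OF L(2)])
qed

end
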